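(* Let $H(s)=K\,\frac{\prod_{i=1}^{n}(s-z_i)}{\prod_{i=1}^{n}(s-p_i)}$ with $K>0$ and real zeros $z=(z_1,\dots,z_n)\in\mathbb{R}^n$ and real poles $p=(p_1,\dots,p_n)\in\mathbb{R}^n$ (so the numerator and denominator have the same degree $n$). Suppose there exist $\mu\in\mathbb{N}=\{1,2,\dots\}$ and $\delta>-\min_{i,j}\{p_i,z_j\}$ such that $$(p+\delta)^{\mu}\succ_w (z+\delta)^{\mu}$$ and $$\sum_{i=1}^n (p_i+\delta)^k\geq \sum_{i=1}^n (z_i+\delta)^k\quad\text{for all }k\in\{1,\dots,\mu-1\}.$$ Then $H$ is logarithmically completely monotonic.
   Context: For $x\in\mathbb{R}^n$ and scalar $\delta$, $(x+\delta)^\mu$ denotes the vector with components $(x_i+\delta)^\mu$. For $x\in\mathbb{R}^n$, $x^{\downarrow}$ is the vector of its components sorted in descending order; $x\succ_w y$ (weak majorization) means $\sum_{i=1}^k x^{\downarrow}_i\geq\sum_{i=1}^k y^{\downarrow}_i$ for all $k=1,\dots,n$. $H$ is logarithmically completely monotonic (LCM) if $H(s)>0$ and $(-1)^k[\log H(s)]^{(k)}\geq 0$ for all $k\in\{1,2,\dots\}$ and all $s\in(\sigma(H),+\infty)$, where $\sigma(H)=\max_i p_i$. *)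

theory Defs
  imports "HOL-Analysis.Analysis"
begin

text \<open>Vectors in R^n are represented as real lists of length n.\<close>

definition desc :: "real list \<Rightarrow> real list" where
  "desc x = rev (sort x)"

definition weak_majorizes :: "real list \<Rightarrow> real list \<Rightarrow> bool" (infix "\<succ>\<^sub>w" 50) where
  "x \<succ>\<^sub>w y \<longleftrightarrow> (\<forall>k\<in>{1..length x}. sum_list (take k (desc x)) \<ge> sum_list (take k (desc y)))"

definition rat_fun :: "real \<Rightarrow> real list \<Rightarrow> real list \<Rightarrow> real \<Rightarrow> real" where
  "rat_fun K z p s = K * prod_list (map (\<lambda>zi. s - zi) z) / prod_list (map (\<lambda>pi. s - pi) p)"

definition sigma :: "real list \<Rightarrow> real" where
  "sigma p = Max (set p)"

definition log_compl_mono :: "(real \<Rightarrow> real) \<Rightarrow> real \<Rightarrow> bool" where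
  "log_compl_mono H sig \<longleftrightarrow> (\<forall>s. s > sig \<longrightarrow> H s > 0 \<and>
      (\<forall>k::nat. k \<ge> 1 \<longrightarrow> (-1) ^ k * (deriv ^^ k) (\<lambda>t. ln (H t)) s \<ge> 0))"

end

theory Submission
  imports Defs
begin

text \<open>Shift by \<open>\<delta>\<close>: the numbers \<open>a\<^sub>i = p\<^sub>i + \<delta>\<close> and \<open>b\<^sub>i = z\<^sub>i + \<delta>\<close> are positive, and
  their power sums satisfy \<open>\<Sum> b\<^sub>i ^ m \<le> \<Sum> a\<^sub>i ^ m\<close> for every \<open>m\<close>: for \<open>m < \<mu>\<close> by hypothesis, for
  \<open>m \<ge> \<mu>\<close> because weak majorization is preserved by the convex increasing map
  \<open>u \<mapsto> u powr (m / \<mu>)\<close>. On the other hand \<open>(-1) ^ k\<close> times the \<open>k\<close>-th derivative of \<open>ln H\<close>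
  at \<open>s\<close> is \<open>(k - 1)! (\<Sum> (s - p\<^sub>i) ^ -k - \<Sum> (s - z\<^sub>i) ^ -k)\<close>, and expanding
  \<open>(s - x) ^ -k = ((s + \<delta>) - (x + \<delta>)) ^ -k\<close> in powers of \<open>x + \<delta>\<close> writes each of the two sums as a
  combination of the power sums with the same nonnegative coefficients, so the difference is
  nonnegative. The first majorization inequality also puts
  every zero below the largest pole, so \<open>H\<close> is positive to the right of \<open>\<sigma>(H)\<close>.\<close>

lemma abel_summation_nonneg:
  fixes c d :: "nat \<Rightarrow> 'a::linordered_idom"
  assumes decreasing: "\<And>i j. i \<le> j \<Longrightarrow> j < n \<Longrightarrow> c j \<le> c i"
    and nonneg: "\<And>i. i < n \<Longrightarrow> 0 \<le> c i"
    and partial_sums: "\<And>k. k \<le> n \<Longrightarrow> 0 \<le> (\<Sum>i<k. d i)"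
  shows "0 \<le> (\<Sum>i<n. c i * d i)"
proof -
  have "e * (\<Sum>i<m. d i) \<le> (\<Sum>i<m. c i * d i)"
    if "m \<le> n" "0 \<le> e" "\<And>i. i < m \<Longrightarrow> e \<le> c i" for m e
    using that
  proof (induction m arbitrary: e)
    case 0
    then show ?case by simp
  next
    case (Suc m)
    have "e * (\<Sum>i<Suc m. d i) \<le> c m * (\<Sum>i<Suc m. d i)"
      using Suc.prems partial_sums[of "Suc m"] by (intro mult_right_mono) auto
    also have "\<dots> = c m * (\<Sum>i<m. d i) + c m * d m"
      by (simp add: algebra_simps)
    also have "\<dots> \<le> (\<Sum>i<m. c i * d i) + c m * d m"
      using Suc.prems decreasing nonneg by (simp add: Suc.IH)
    finally show ?case by simp
  qed
  from this[of n 0] show ?thesis using nonneg by simp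
qed

lemma powr_ge_tangent:
  fixes x y r :: real
  assumes "0 < x" "0 < y" "1 \<le> r"
  shows "r * y powr (r - 1) * (x - y) \<le> x powr r - y powr r"
proof -
  have "((\<lambda>x. x powr r) has_field_derivative r * y powr (r - 1)) (at y within {0<..})"
    using has_real_derivative_powr[OF assms(2)] by (rule has_field_derivative_at_within)
  then show ?thesis
    using convex_on_imp_above_tangent[OF powr_convex[OF assms(3)], of y x] assms
    by (auto simp: interior_open)
qed

text \<open>Tomic--Weyl for \<open>u powr r\<close>: bound each term by the tangent at \<open>Y i\<close>; the slopes decrease
  with \<open>i\<close>, so Abel summation against the prefix-sum hypothesis finishes.\<close>

lemma sum_powr_le_if_prefix_sums_le:
  fixes X Y :: "nat \<Rightarrow> real" and r :: real
  assumes decreasing: "\<And>i j. i \<le> j \<Longrightarrow> j < n \<Longrightarrow> Y j \<le> Y i"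
    and pos: "\<And>i. i < n \<Longrightarrow> 0 < X i" "\<And>i. i < n \<Longrightarrow> 0 < Y i"
    and prefix: "\<And>k. k \<le> n \<Longrightarrow> (\<Sum>i<k. Y i) \<le> (\<Sum>i<k. X i)"
    and r: "1 \<le> r"
  shows "(\<Sum>i<n. Y i powr r) \<le> (\<Sum>i<n. X i powr r)"
proof -
  have "0 \<le> (\<Sum>i<n. r * Y i powr (r - 1) * (X i - Y i))"
  proof (rule abel_summation_nonneg)
    fix i j assume "i \<le> j" "j < n"
    then show "r * Y j powr (r - 1) \<le> r * Y i powr (r - 1)"
      using decreasing pos(2)[of j] r by (intro mult_left_mono powr_mono2) auto
  next
    fix k assume "k \<le> n"
    then show "0 \<le> (\<Sum>i<k. X i - Y i)"
      using prefix by (simp add: sum_subtractf)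
  qed (use r in auto)
  also have "\<dots> \<le> (\<Sum>i<n. X i powr r - Y i powr r)"
    using pos r by (intro sum_mono powr_ge_tangent) auto
  finally show ?thesis by (simp add: sum_subtractf)
qed

lemma sorted_desc: "sorted_wrt (\<ge>) (desc x)"
  unfolding desc_def sorted_wrt_rev using sorted_sort[of x] by simp

lemma mset_desc [simp]: "mset (desc x) = mset x"
  unfolding desc_def by simp

lemma set_desc [simp]: "set (desc x) = set x"
  unfolding desc_def by simp

lemma length_desc [simp]: "length (desc x) = length x"
  unfolding desc_def by simp

lemma sum_list_map_eq_sum_desc_nth: "(\<Sum>u\<leftarrow>x. f u) = (\<Sum>i<length x. f (desc x ! i))"
proof -
  have "(\<Sum>u\<leftarrow>x. f u) = (\<Sum>u\<leftarrow>desc x. f u)"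
    by (metis mset_desc mset_map sum_mset_sum_list)
  then show ?thesis by (simp add: sum_list_sum_nth atLeast0LessThan)
qed

lemma sum_list_take_eq_sum_nth:
  "k \<le> length xs \<Longrightarrow> sum_list (take k xs) = (\<Sum>i<k. xs ! i)"
  by (simp add: sum_list_sum_nth atLeast0LessThan min_absorb2)

lemma weak_majorizes_sum_powr_le:
  fixes x y :: "real list" and r :: real
  assumes maj: "x \<succ>\<^sub>w y" and len: "length x = length y"
    and pos: "\<forall>u\<in>set x. 0 < u" "\<forall>v\<in>set y. 0 < v" and r: "1 \<le> r"
  shows "(\<Sum>v\<leftarrow>y. v powr r) \<le> (\<Sum>u\<leftarrow>x. u powr r)"
proof -
  define X Y where "X = desc x" and "Y = desc y"
  have "(\<Sum>i<length y. Y ! i powr r) \<le> (\<Sum>i<length y. X ! i powr r)"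
  proof (rule sum_powr_le_if_prefix_sums_le[OF _ _ _ _ r])
    fix i j assume "i \<le> j" "j < length y"
    then show "Y ! j \<le> Y ! i"
      using sorted_desc[of y] unfolding Y_def
      by (metis length_desc order.refl order_le_less sorted_wrt_nth_less)
  next
    fix k assume k: "k \<le> length y"
    show "(\<Sum>i<k. Y ! i) \<le> (\<Sum>i<k. X ! i)"
    proof (cases "k = 0")
      case False
      with k len maj have "sum_list (take k Y) \<le> sum_list (take k X)"
        unfolding weak_majorizes_def X_def Y_def by auto
      with k len show ?thesis
        unfolding X_def Y_def by (simp add: sum_list_take_eq_sum_nth)
    qed simp
  next
    fix i assume "i < length y"
    then show "0 < X ! i" "0 < Y ! i"
      using pos len unfolding X_def Y_def by (metis length_desc nth_mem set_desc)+
  qed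
  then show ?thesis
    using len unfolding X_def Y_def by (simp add: sum_list_map_eq_sum_desc_nth)
qed

lemma exists_ge_if_weak_majorizes:
  assumes maj: "x \<succ>\<^sub>w y" and len: "length x = length y" and v: "v \<in> set y"
  shows "\<exists>u\<in>set x. v \<le> u"
proof -
  have ne: "0 < length y" using v by (cases y) auto
  obtain j where j: "j < length y" "desc y ! j = v"
    using v by (metis in_set_conv_nth set_desc length_desc)
  have "v \<le> desc y ! 0"
    using sorted_desc[of y] j by (cases "j = 0") (auto dest: sorted_wrt_nth_less)
  also have "desc y ! 0 \<le> desc x ! 0"
    using maj ne len unfolding weak_majorizes_def
    by (auto dest!: bspec[of _ _ 1] simp: take_Suc_conv_app_nth Suc_le_eq)
  finally show ?thesis using ne len by (metis length_desc nth_mem set_desc)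
qed

lemma exists_ge_if_weak_majorizes_power:
  fixes a b :: "real list" and \<mu> :: nat
  assumes maj: "map (\<lambda>u. u ^ \<mu>) a \<succ>\<^sub>w map (\<lambda>v. v ^ \<mu>) b" and len: "length a = length b"
    and nonneg: "\<forall>u\<in>set a. 0 \<le> u" and \<mu>: "1 \<le> \<mu>" and v: "v \<in> set b"
  shows "\<exists>u\<in>set a. v \<le> u"
proof -
  have "\<exists>w\<in>set (map (\<lambda>u. u ^ \<mu>) a). v ^ \<mu> \<le> w"
    using v len by (intro exists_ge_if_weak_majorizes[OF maj]) auto
  then obtain u where "u \<in> set a" "v ^ Suc (\<mu> - 1) \<le> u ^ Suc (\<mu> - 1)"
    using \<mu> by auto
  with nonneg show ?thesis by (metis power_le_imp_le_base)
qed

lemma power_sums_le_if_weak_majorizes_power: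
  fixes a b :: "real list" and \<mu> m :: nat
  assumes len: "length a = length b" and pos: "\<forall>u\<in>set a. 0 < u" "\<forall>v\<in>set b. 0 < v"
    and \<mu>: "1 \<le> \<mu>"
    and maj: "map (\<lambda>u. u ^ \<mu>) a \<succ>\<^sub>w map (\<lambda>v. v ^ \<mu>) b"
    and low: "\<forall>k\<in>{1..<\<mu>}. (\<Sum>v\<leftarrow>b. v ^ k) \<le> (\<Sum>u\<leftarrow>a. u ^ k)"
  shows "(\<Sum>v\<leftarrow>b. v ^ m) \<le> (\<Sum>u\<leftarrow>a. u ^ m)"
proof -
  consider "m = 0" | "m \<in> {1..<\<mu>}" | "\<mu> \<le> m" by force
  then show ?thesis
  proof cases
    case 1
    then show ?thesis using len by (simp add: sum_list_triv)
  next
    case 2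
    then show ?thesis using low by blast
  next
    case 3
    define r where "r = real m / real \<mu>"
    have power_eq: "(w ^ \<mu>) powr r = w ^ m" if "0 < w" for w :: real
      using that \<mu> by (simp add: r_def powr_realpow [symmetric] powr_powr)
    have "(\<Sum>v\<leftarrow>map (\<lambda>v. v ^ \<mu>) b. v powr r) \<le> (\<Sum>u\<leftarrow>map (\<lambda>u. u ^ \<mu>) a. u powr r)"
      using 3 \<mu> len pos by (intro weak_majorizes_sum_powr_le[OF maj]) (auto simp: r_def)
    then show ?thesis
      using pos by (simp add: o_def power_eq cong: map_cong)
  qed
qed

lemma neg_binomial_series:
  fixes a t :: real
  assumes "\<bar>a\<bar> < t"
  shows "(\<lambda>m. real ((j + m) choose m) * a ^ m / t ^ (Suc j + m)) sums (1 / (t - a) ^ Suc j)"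
proof -
  have t: "0 < t" using assms by linarith
  have coeff: "(- real (Suc j)) gchoose m = (-1) ^ m * real ((j + m) choose m)" for m
  proof -
    have "real (Suc j) + real m - 1 = real (j + m)" by simp
    then show ?thesis by (simp only: gbinomial_minus binomial_gbinomial)
  qed
  have "(\<lambda>m. ((- real (Suc j)) gchoose m) * (- a / t) ^ m) sums (1 + - a / t) powr (- real (Suc j))"
    using assms by (intro gen_binomial_real) (simp add: abs_minus_commute)
  then have "(\<lambda>m. ((- real (Suc j)) gchoose m) * (- a / t) ^ m / t ^ Suc j)
      sums ((1 + - a / t) powr (- real (Suc j)) / t ^ Suc j)"
    by (rule sums_divide)
  moreover have "((- real (Suc j)) gchoose m) * (- a / t) ^ m / t ^ Suc j
      = real ((j + m) choose m) * a ^ m / t ^ (Suc j + m)" for m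
  proof -
    have sign: "(-1) ^ m * (- a / t) ^ m = (a / t) ^ m"
      by (simp flip: power_mult_distrib)
    have "((- real (Suc j)) gchoose m) * (- a / t) ^ m / t ^ Suc j
        = real ((j + m) choose m) * ((-1) ^ m * (- a / t) ^ m) / t ^ Suc j"
      unfolding coeff by (simp only: mult_ac)
    also have "\<dots> = real ((j + m) choose m) * a ^ m / t ^ (Suc j + m)"
      unfolding sign using t by (simp add: power_add power_divide)
    finally show ?thesis .
  qed
  moreover have "(1 + - a / t) powr (- real (Suc j)) / t ^ Suc j = 1 / (t - a) ^ Suc j"
  proof -
    have "1 + - a / t = (t - a) / t" "0 < t - a" using assms t by (auto simp: field_simps)
    with t show ?thesis
      by (simp only: powr_minus powr_realpow divide_pos_pos power_divide) (simp add: field_simps)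
  qed
  ultimately show ?thesis by simp
qed

lemma sum_list_neg_binomial_series:
  fixes as :: "real list" and t :: real
  assumes "\<forall>a\<in>set as. \<bar>a\<bar> < t"
  shows "(\<lambda>m. real ((j + m) choose m) * (\<Sum>a\<leftarrow>as. a ^ m) / t ^ (Suc j + m))
           sums (\<Sum>a\<leftarrow>as. 1 / (t - a) ^ Suc j)"
  using assms
proof (induction as)
  case (Cons a as)
  then have "(\<lambda>m. real ((j + m) choose m) * a ^ m / t ^ (Suc j + m)
      + real ((j + m) choose m) * (\<Sum>a\<leftarrow>as. a ^ m) / t ^ (Suc j + m))
      sums (1 / (t - a) ^ Suc j + (\<Sum>a\<leftarrow>as. 1 / (t - a) ^ Suc j))"
    by (intro sums_add neg_binomial_series) auto
  then show ?case by (simp add: distrib_left add_divide_distrib)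
qed simp

lemma sum_inverse_power_le_if_power_sums_le:
  fixes a b :: "real list" and t :: real
  assumes bounded: "\<forall>u\<in>set a. \<bar>u\<bar> < t" "\<forall>v\<in>set b. \<bar>v\<bar> < t"
    and power_sums: "\<And>m. (\<Sum>v\<leftarrow>b. v ^ m) \<le> (\<Sum>u\<leftarrow>a. u ^ m)"
  shows "(\<Sum>v\<leftarrow>b. 1 / (t - v) ^ Suc j) \<le> (\<Sum>u\<leftarrow>a. 1 / (t - u) ^ Suc j)"
proof (cases "0 < t")
  case True
  have "real ((j + m) choose m) * (\<Sum>v\<leftarrow>b. v ^ m) / t ^ (Suc j + m)
      \<le> real ((j + m) choose m) * (\<Sum>u\<leftarrow>a. u ^ m) / t ^ (Suc j + m)" for m
    using power_sums[of m] True by (intro divide_right_mono mult_left_mono) simp_all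
  then show ?thesis
    using sum_list_neg_binomial_series[OF bounded(2)] sum_list_neg_binomial_series[OF bounded(1)]
    by (rule sums_le)
next
  case False
  then have "\<not> \<bar>u\<bar> < t" for u :: real using abs_ge_zero[of u] by linarith
  with bounded have "a = []" "b = []" by (auto simp: neq_Nil_conv)
  then show ?thesis by simp
qed

lemma has_field_derivative_sum_list:
  assumes "\<And>x. x \<in> set xs \<Longrightarrow> (f x has_field_derivative f' x) (at s)"
  shows "((\<lambda>t. \<Sum>x\<leftarrow>xs. f x t) has_field_derivative (\<Sum>x\<leftarrow>xs. f' x)) (at s)"
  using assms by (induction xs) (auto intro!: derivative_eq_intros)

lemma has_real_derivative_inverse_power_diff:
  fixes a s :: real
  assumes "a < s"
  shows "((\<lambda>t. 1 / (t - a) ^ k) has_real_derivative - real k / (s - a) ^ Suc k) (at s)"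
proof -
  have D: "((\<lambda>t. inverse ((t - a) ^ k)) has_real_derivative
      - (inverse ((s - a) ^ k) * (real k * (s - a) ^ (k - 1)) * inverse ((s - a) ^ k))) (at s)"
    using assms by (auto intro!: derivative_eq_intros)
  have "inverse (d ^ k) * (real k * d ^ (k - 1)) * inverse (d ^ k) = real k / d ^ Suc k"
    if "d \<noteq> 0" for d :: real
    using that by (cases k) (simp_all add: field_simps)
  from D this[of "s - a"] assms show ?thesis by (simp only: inverse_eq_divide) simp
qed

lemma has_real_derivative_sum_list_inverse_power:
  fixes t :: real
  assumes "\<forall>x\<in>set xs. x < t"
  shows "((\<lambda>t. \<Sum>x\<leftarrow>xs. 1 / (t - x) ^ Suc j) has_real_derivative
      - real (Suc j) * (\<Sum>x\<leftarrow>xs. 1 / (t - x) ^ Suc (Suc j))) (at t)"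
proof -
  have "(\<Sum>x\<leftarrow>xs. - real (Suc j) / (t - x) ^ Suc (Suc j))
      = - real (Suc j) * (\<Sum>x\<leftarrow>xs. 1 / (t - x) ^ Suc (Suc j))"
    by (simp flip: sum_list_const_mult)
  moreover have "((\<lambda>t. \<Sum>x\<leftarrow>xs. 1 / (t - x) ^ Suc j) has_real_derivative
      (\<Sum>x\<leftarrow>xs. - real (Suc j) / (t - x) ^ Suc (Suc j))) (at t)"
    using assms by (intro has_field_derivative_sum_list has_real_derivative_inverse_power_diff) auto
  ultimately show ?thesis by (simp only:)
qed

lemma prod_list_diff_pos:
  fixes s :: real
  assumes "\<forall>x\<in>set xs. x < s"
  shows "0 < prod_list (map (\<lambda>x. s - x) xs)"
  using assms by (induction xs) auto

lemma ln_prod_list_diff: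
  fixes s :: real
  assumes "\<forall>x\<in>set xs. x < s"
  shows "ln (prod_list (map (\<lambda>x. s - x) xs)) = (\<Sum>x\<leftarrow>xs. ln (s - x))"
  using assms
proof (induction xs)
  case (Cons a xs)
  then have "0 < s - a" "0 < prod_list (map (\<lambda>x. s - x) xs)"
    by (simp_all add: prod_list_diff_pos)
  with Cons show ?case by (simp add: ln_mult)
qed simp

lemma rat_fun_pos:
  assumes "0 < K" "\<forall>x\<in>set z \<union> set p. x < s"
  shows "0 < rat_fun K z p s"
  using assms prod_list_diff_pos[of z s] prod_list_diff_pos[of p s]
  unfolding rat_fun_def by simp

lemma ln_rat_fun:
  assumes "0 < K" "\<forall>x\<in>set z \<union> set p. x < s"
  shows "ln (rat_fun K z p s) = ln K + (\<Sum>x\<leftarrow>z. ln (s - x)) - (\<Sum>x\<leftarrow>p. ln (s - x))"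
  using assms prod_list_diff_pos[of z s] prod_list_diff_pos[of p s]
    ln_prod_list_diff[of z s] ln_prod_list_diff[of p s]
  unfolding rat_fun_def by (simp add: ln_mult ln_div)

lemma higher_deriv_ln_rat_fun:
  assumes K: "0 < K" and s: "\<forall>x\<in>set z \<union> set p. x < s"
  shows "(deriv ^^ Suc j) (\<lambda>t. ln (rat_fun K z p t)) s
    = (-1) ^ j * fact j * ((\<Sum>x\<leftarrow>z. 1 / (s - x) ^ Suc j) - (\<Sum>x\<leftarrow>p. 1 / (s - x) ^ Suc j))"
proof -
  define S where "S = {t. \<forall>x\<in>set z \<union> set p. x < t}"
  have "S = (\<Inter>x\<in>set z \<union> set p. {x<..})" unfolding S_def by auto
  then have "open S" by (auto intro: open_INT)
  define G where "G j t = (-1) ^ j * fact j *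
    ((\<Sum>x\<leftarrow>z. 1 / (t - x) ^ Suc j) - (\<Sum>x\<leftarrow>p. 1 / (t - x) ^ Suc j))" for j t
  have G_deriv: "(G j has_real_derivative G (Suc j) t) (at t)" if "t \<in> S" for j t
  proof -
    have "(G j has_real_derivative (-1) ^ j * fact j *
        (- real (Suc j) * (\<Sum>x\<leftarrow>z. 1 / (t - x) ^ Suc (Suc j))
          - - real (Suc j) * (\<Sum>x\<leftarrow>p. 1 / (t - x) ^ Suc (Suc j)))) (at t)"
      unfolding G_def using that by (intro DERIV_cmult DERIV_diff has_real_derivative_sum_list_inverse_power) (auto simp: S_def)
    moreover have "(-1) ^ j * fact j * (- real (Suc j) * A - - real (Suc j) * B)
        = (-1) ^ Suc j * fact (Suc j) * (A - B)" for A B :: real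
      by (simp add: algebra_simps)
    ultimately show ?thesis unfolding G_def by (simp only:)
  qed
  have ln_deriv: "((\<lambda>t. ln (rat_fun K z p t)) has_real_derivative G 0 t) (at t)" if "t \<in> S" for t
  proof (rule has_field_derivative_transform_within_open[OF _ \<open>open S\<close> that])
    show "((\<lambda>t. ln K + (\<Sum>x\<leftarrow>z. ln (t - x)) - (\<Sum>x\<leftarrow>p. ln (t - x)))
        has_real_derivative G 0 t) (at t)"
      unfolding G_def using that S_def
      by (auto intro!: derivative_eq_intros has_field_derivative_sum_list)
  qed (use K S_def ln_rat_fun in auto)
  have "(deriv ^^ Suc j) (\<lambda>t. ln (rat_fun K z p t)) t = G j t" if "t \<in> S" for t
    using that
  proof (induction j arbitrary: t)
    case 0
    then show ?case using ln_deriv by (simp add: DERIV_imp_deriv)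
  next
    case (Suc j)
    have "((deriv ^^ Suc j) (\<lambda>t. ln (rat_fun K z p t)) has_real_derivative G (Suc j) t) (at t)"
      using Suc by (intro has_field_derivative_transform_within_open[OF G_deriv \<open>open S\<close>]) auto
    then show ?case by (simp add: DERIV_imp_deriv)
  qed
  then show ?thesis using s unfolding S_def G_def by simp
qed

lemma log_compl_mono_rat_fun_if_shifted_power_sums_le:
  fixes K \<delta> :: real and z p :: "real list"
  assumes K: "0 < K"
    and zeros_le: "\<forall>x\<in>set z. \<exists>y\<in>set p. x \<le> y"
    and shift_pos: "\<forall>x\<in>set p \<union> set z. 0 < x + \<delta>"
    and power_sums: "\<And>m. (\<Sum>x\<leftarrow>z. (x + \<delta>) ^ m) \<le> (\<Sum>x\<leftarrow>p. (x + \<delta>) ^ m)"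
  shows "log_compl_mono (rat_fun K z p) (sigma p)"
  unfolding log_compl_mono_def
proof (intro allI impI conjI)
  fix s assume "sigma p < s"
  then have poles: "\<forall>x\<in>set p. x < s"
    unfolding sigma_def by (meson List.finite_set Max_ge le_less_trans)
  with zeros_le have below: "\<forall>x\<in>set z \<union> set p. x < s" by fastforce
  show "0 < rat_fun K z p s" using K below by (rule rat_fun_pos)
  fix k :: nat assume "1 \<le> k"
  obtain j where k: "k = Suc j" using \<open>1 \<le> k\<close> by (cases k) auto
  have "\<bar>x + \<delta>\<bar> < s + \<delta>" if "x \<in> set p \<union> set z" for x
  proof -
    have "x < s" "0 < x + \<delta>" using that below shift_pos by auto
    then show ?thesis by linarith
  qed
  then have "(\<Sum>v\<leftarrow>map (\<lambda>x. x + \<delta>) z. 1 / (s + \<delta> - v) ^ Suc j)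
      \<le> (\<Sum>u\<leftarrow>map (\<lambda>x. x + \<delta>) p. 1 / (s + \<delta> - u) ^ Suc j)"
    using power_sums by (intro sum_inverse_power_le_if_power_sums_le) (auto simp: o_def)
  then have "(\<Sum>x\<leftarrow>z. 1 / (s - x) ^ Suc j) \<le> (\<Sum>x\<leftarrow>p. 1 / (s - x) ^ Suc j)"
    by (simp add: o_def)
  then show "0 \<le> (-1) ^ k * (deriv ^^ k) (\<lambda>t. ln (rat_fun K z p t)) s"
    unfolding k higher_deriv_ln_rat_fun[OF K below]
    by (simp add: mult.assoc[symmetric] power_add[symmetric] mult_nonneg_nonpos)
qed

theorem theorem1:
  fixes K \<delta> :: real and z p :: "real list" and \<mu> :: nat
  assumes "K > 0"
    and "length z = length p"
    and "\<mu> \<ge> 1"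
    and "\<delta> > - Min (set p \<union> set z)"
    and "map (\<lambda>x. (x + \<delta>) ^ \<mu>) p \<succ>\<^sub>w map (\<lambda>x. (x + \<delta>) ^ \<mu>) z"
    and "\<forall>k\<in>{1..<\<mu>}. (\<Sum>x\<leftarrow>p. (x + \<delta>) ^ k) \<ge> (\<Sum>x\<leftarrow>z. (x + \<delta>) ^ k)"
  shows "log_compl_mono (rat_fun K z p) (sigma p)"
proof (rule log_compl_mono_rat_fun_if_shifted_power_sums_le[OF \<open>K > 0\<close>])
  define a b where "a = map (\<lambda>x. x + \<delta>) p" and "b = map (\<lambda>x. x + \<delta>) z"
  show shift_pos: "\<forall>x\<in>set p \<union> set z. 0 < x + \<delta>"
  proof
    fix x assume "x \<in> set p \<union> set z"
    then have "Min (set p \<union> set z) \<le> x" by simp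
    then show "0 < x + \<delta>" using assms(4) by linarith
  qed
  have maj: "map (\<lambda>u. u ^ \<mu>) a \<succ>\<^sub>w map (\<lambda>v. v ^ \<mu>) b"
    using assms(5) by (simp add: a_def b_def o_def)
  have len: "length a = length b" using assms(2) by (simp add: a_def b_def)
  have pos: "\<forall>u\<in>set a. 0 < u" "\<forall>v\<in>set b. 0 < v"
    using shift_pos by (auto simp: a_def b_def)
  have low: "\<forall>k\<in>{1..<\<mu>}. (\<Sum>v\<leftarrow>b. v ^ k) \<le> (\<Sum>u\<leftarrow>a. u ^ k)"
    using assms(6) by (simp add: a_def b_def o_def)
  show "\<forall>x\<in>set z. \<exists>y\<in>set p. x \<le> y"
  proof
    fix x assume "x \<in> set z"
    then have "\<exists>u\<in>set a. x + \<delta> \<le> u"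
      using pos by (intro exists_ge_if_weak_majorizes_power[OF maj len _ assms(3)])
        (auto simp: b_def less_imp_le)
    then show "\<exists>y\<in>set p. x \<le> y" by (auto simp: a_def)
  qed
  show "(\<Sum>x\<leftarrow>z. (x + \<delta>) ^ m) \<le> (\<Sum>x\<leftarrow>p. (x + \<delta>) ^ m)" for m
    using power_sums_le_if_weak_majorizes_power[OF len pos assms(3) maj low, of m]
    by (simp add: a_def b_def o_def)
qed

end
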